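(* Let $n\ge3$ be odd and let $D\subseteq\{0,1,\dots,n-1\}$ with $|D|=2$. Then the unidirectional cycle $\overrightarrow{C_n}$ is $D$-antimagic.
   Context: An oriented graph is a simple graph each of whose edges is given one direction. For vertices $u,v$, $d(u,v)$ is the length of a shortest directed path from $u$ to $v$ ($d(u,u)=0$). For a set $D$ of nonnegative integers, $N_D(v)=\{y : d(v,y)\in D\}$; for a bijection $f:V\to\{1,\dots,|V|\}$, $\omega_D(v)=\sum_{x\in N_D(v)}f(x)$ (empty sum $0$); $f$ is $D$-antimagic if distinct vertices have distinct $D$-weights, and the graph is $D$-antimagic if such an $f$ exists. The unidirectional cycle $\overrightarrow{C_n}$ ($n\ge3$) has vertices $v_1,\dots,v_n$ and arcs $(v_i,v_{i+1})$ for $1\le i\le n-1$ and $(v_n,v_1)$; $d(v_i,v_j)=(j-i)\bmod n$. *)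

theory Defs
  imports Main
begin

text \<open>The unidirectional cycle on n vertices, vertex v_(i+1) represented by i in {0..<n}.
  Directed distance d(v_i, v_j) = (j - i) mod n.\<close>

definition cyc_dist :: "nat \<Rightarrow> nat \<Rightarrow> nat \<Rightarrow> nat" where
  "cyc_dist n u v = nat ((int v - int u) mod int n)"

definition cyc_ND :: "nat \<Rightarrow> nat set \<Rightarrow> nat \<Rightarrow> nat set" where
  "cyc_ND n D v = {y \<in> {0..<n}. cyc_dist n v y \<in> D}"

definition cyc_weight :: "nat \<Rightarrow> nat set \<Rightarrow> (nat \<Rightarrow> nat) \<Rightarrow> nat \<Rightarrow> nat" where
  "cyc_weight n D f v = (\<Sum>x\<in>cyc_ND n D v. f x)"

definition cyc_D_antimagic_labeling :: "nat \<Rightarrow> nat set \<Rightarrow> (nat \<Rightarrow> nat) \<Rightarrow> bool" where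
  "cyc_D_antimagic_labeling n D f \<longleftrightarrow>
     bij_betw f {0..<n} {1..n} \<and> inj_on (cyc_weight n D f) {0..<n}"

definition cyc_D_antimagic :: "nat \<Rightarrow> nat set \<Rightarrow> bool" where
  "cyc_D_antimagic n D \<longleftrightarrow> (\<exists>f. cyc_D_antimagic_labeling n D f)"

end

theory Submission
  imports Defs "HOL-Number_Theory.Cong"
begin

text \<open>Label the vertex v_(i+1) with i + 1. For D = {a, b} the out-neighbourhood of vertex v is
  {(v + a) mod n, (v + b) mod n}, so its weight is congruent to 2 v + a + b + 2 modulo n. Since n is
  odd, 2 is invertible modulo n, and the weights of distinct vertices are distinct already modulo n.\<close>

lemma cyc_dist_eq_iff:
  assumes "v < n" "y < n" "a < n"
  shows "cyc_dist n v y = a \<longleftrightarrow> y = (v + a) mod n"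
proof -
  have "cyc_dist n v y = a \<longleftrightarrow> (int y - int v) mod int n = int a mod int n"
    unfolding cyc_dist_def using assms by (auto simp: nat_eq_iff)
  also have "\<dots> \<longleftrightarrow> int y mod int n = (int v + int a) mod int n"
    by (simp add: mod_eq_dvd_iff algebra_simps)
  also have "\<dots> \<longleftrightarrow> y = (v + a) mod n"
    using assms by (simp flip: of_nat_add of_nat_mod)
  finally show ?thesis .
qed

lemma cyc_ND_doubleton:
  assumes "v < n" "a < n" "b < n"
  shows "cyc_ND n {a, b} v = {(v + a) mod n, (v + b) mod n}"
  unfolding cyc_ND_def
  using cyc_dist_eq_iff[OF assms(1) _ assms(2)] cyc_dist_eq_iff[OF assms(1) _ assms(3)] assms
  by auto

lemma cyc_weight_Suc_doubleton:
  assumes "v < n" "a < n" "b < n" "a \<noteq> b"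
  shows "cyc_weight n {a, b} Suc v = (v + a) mod n + (v + b) mod n + 2"
proof -
  have "(v + a) mod n \<noteq> (v + b) mod n"
    using assms by (metis cong_def cong_add_lcancel_nat cong_less_modulus_unique_nat)
  then show ?thesis
    unfolding cyc_weight_def cyc_ND_doubleton[OF assms(1-3)] by simp
qed

lemma cyc_weight_Suc_cong:
  assumes "v < n" "a < n" "b < n" "a \<noteq> b"
  shows "[cyc_weight n {a, b} Suc v = 2 * v + (a + b + 2)] (mod n)"
proof -
  have "[(v + a) mod n + (v + b) mod n + 2 = (v + a) + (v + b) + 2] (mod n)"
    by (intro cong_add cong_mod_leftI cong_refl)
  then show ?thesis
    unfolding cyc_weight_Suc_doubleton[OF assms] by (simp add: mult_2 add_ac)
qed

lemma inj_on_cyc_weight_Suc: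
  assumes "odd n" "a < n" "b < n" "a \<noteq> b"
  shows "inj_on (cyc_weight n {a, b} Suc) {0..<n}"
proof (rule inj_onI)
  fix v w assume v: "v \<in> {0..<n}" and w: "w \<in> {0..<n}"
    and "cyc_weight n {a, b} Suc v = cyc_weight n {a, b} Suc w"
  then have "[2 * v + (a + b + 2) = 2 * w + (a + b + 2)] (mod n)"
    using cyc_weight_Suc_cong assms(2-4)
    by (metis atLeastLessThan_iff cong_sym cong_trans)
  then have "[2 * v = 2 * w] (mod n)"
    using cong_add_rcancel_nat by blast
  moreover have "coprime 2 n"
    using assms(1) by simp
  ultimately have "[v = w] (mod n)"
    by (simp add: cong_mult_lcancel_nat)
  then show "v = w"
    using v w by (simp add: cong_less_modulus_unique_nat)
qed

lemma bij_betw_Suc_atLeastLessThan: "bij_betw Suc {0..<n} {1..n}"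
  by (simp add: bij_betw_def atLeastLessThanSuc_atLeastAtMost)

theorem mainTheorem15:
  fixes n :: nat and D :: "nat set"
  assumes "n \<ge> 3" and "odd n" and "D \<subseteq> {0..<n}" and "card D = 2"
  shows "cyc_D_antimagic n D"
proof -
  obtain a b where D: "D = {a, b}" and "a \<noteq> b"
    using assms(4) by (meson card_2_iff)
  moreover have "a < n" "b < n"
    using assms(3) D by auto
  ultimately have "cyc_D_antimagic_labeling n D Suc"
    unfolding cyc_D_antimagic_labeling_def
    using bij_betw_Suc_atLeastLessThan inj_on_cyc_weight_Suc[OF assms(2)] by simp
  then show ?thesis
    unfolding cyc_D_antimagic_def by blast
qed

end
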